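(* Consider the two-dimensional minimal surface equation $$\mathcal{E}_{\min\Sigma}=\{(1+u_y^2)u_{xx}-2u_xu_yu_{xy}+(1+u_x^2)u_{yy}=0\}$$ for $u=u(x,y)$. The Lie algebra of (generating sections of) contact symmetries of $\mathcal{E}_{\min\Sigma}$ is generated by all solutions $\varphi(u_x,u_y)$ of the equation $$(1+u_x^2)\frac{\partial^2\varphi}{\partial u_x^2}+2u_xu_y\frac{\partial^2\varphi}{\partial u_x\partial u_y}+(1+u_y^2)\frac{\partial^2\varphi}{\partial u_y^2}=0$$ together with the sections $\varphi_3^{12}=yu_x-xu_y$, $\bar\varphi_3^1=x+uu_x$, $\bar\varphi_3^2=y+uu_y$, and $\varphi_4=u-xu_x-yu_y$.
   Context: A contact symmetry of $\mathcal{E}_{\min\Sigma}=\{F=0\}$ is given by its generating section $\varphi=\varphi(x,y,u,u_x,u_y)$ satisfying the linearized equation $\ell_F(\varphi)=0$ on the infinite prolongation $\mathcal{E}_{\min\Sigma}^\infty$, where $\ell_F=\sum_\sigma \frac{\partial F}{\partial u_\sigma}D_\sigma$ and $D_\sigma$ are compositions of total derivatives. The Lie bracket is the Jacobi bracket $\{\varphi',\varphi''\}=\mathfrak{D}_{\varphi'}(\varphi'')-\mathfrak{D}_{\varphi''}(\varphi')$, with $\mathfrak{D}_\varphi=\sum_\sigma D_\sigma(\varphi)\partial/\partial u_\sigma$. *)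

theory Defs
  imports "HOL-Analysis.Analysis"
begin

text \<open>Functions of the first-order jet coordinates (x, y, u, p = u_x, q = u_y).\<close>
type_synonym fn5 = "real \<Rightarrow> real \<Rightarrow> real \<Rightarrow> real \<Rightarrow> real \<Rightarrow> real"

definition pX :: "fn5 \<Rightarrow> fn5" where
  "pX f = (\<lambda>x y u p q. deriv (\<lambda>v. f v y u p q) x)"
definition pY :: "fn5 \<Rightarrow> fn5" where
  "pY f = (\<lambda>x y u p q. deriv (\<lambda>v. f x v u p q) y)"
definition pU :: "fn5 \<Rightarrow> fn5" where
  "pU f = (\<lambda>x y u p q. deriv (\<lambda>v. f x y v p q) u)"
definition pP :: "fn5 \<Rightarrow> fn5" where
  "pP f = (\<lambda>x y u p q. deriv (\<lambda>v. f x y u v q) p)"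
definition pQ :: "fn5 \<Rightarrow> fn5" where
  "pQ f = (\<lambda>x y u p q. deriv (\<lambda>v. f x y u p v) q)"

definition cont5 :: "fn5 \<Rightarrow> bool" where
  "cont5 f \<longleftrightarrow> continuous_on UNIV (\<lambda>(x, y, u, p, q). f x y u p q)"

definition partials_exist :: "fn5 \<Rightarrow> bool" where
  "partials_exist f \<longleftrightarrow> (\<forall>x y u p q.
      (\<lambda>v. f v y u p q) differentiable (at x) \<and>
      (\<lambda>v. f x v u p q) differentiable (at y) \<and>
      (\<lambda>v. f x y v p q) differentiable (at u) \<and>
      (\<lambda>v. f x y u v q) differentiable (at p) \<and>
      (\<lambda>v. f x y u p v) differentiable (at q))"

fun Ck :: "nat \<Rightarrow> fn5 \<Rightarrow> bool" where
  "Ck 0 f = cont5 f"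
| "Ck (Suc k) f = (cont5 f \<and> partials_exist f \<and>
      Ck k (pX f) \<and> Ck k (pY f) \<and> Ck k (pU f) \<and> Ck k (pP f) \<and> Ck k (pQ f))"

definition smooth5 :: "fn5 \<Rightarrow> bool" where
  "smooth5 f \<longleftrightarrow> (\<forall>k. Ck k f)"

text \<open>The minimal surface equation F(p,q,r,s,t) with r = u_xx, s = u_xy, t = u_yy,
  and its total derivatives (a = u_xxx, b = u_xxy, c = u_xyy, d = u_yyy).\<close>
definition Fms :: "real \<Rightarrow> real \<Rightarrow> real \<Rightarrow> real \<Rightarrow> real \<Rightarrow> real" where
  "Fms p q r s t = (1 + q^2) * r - 2 * p * q * s + (1 + p^2) * t"

definition DxF :: "real \<Rightarrow> real \<Rightarrow> real \<Rightarrow> real \<Rightarrow> real \<Rightarrow> real \<Rightarrow> real \<Rightarrow> real \<Rightarrow> real" where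
  "DxF p q r s t a b c =
     2 * q * s * r + (1 + q^2) * a - 2 * (r * q * s + p * s * s + p * q * b)
     + 2 * p * r * t + (1 + p^2) * c"

definition DyF :: "real \<Rightarrow> real \<Rightarrow> real \<Rightarrow> real \<Rightarrow> real \<Rightarrow> real \<Rightarrow> real \<Rightarrow> real \<Rightarrow> real" where
  "DyF p q r s t b c d =
     2 * q * t * r + (1 + q^2) * b - 2 * (s * q * s + p * t * s + p * q * c)
     + 2 * p * s * t + (1 + p^2) * d"

definition Dx1 :: "fn5 \<Rightarrow> real \<Rightarrow> real \<Rightarrow> real \<Rightarrow> real \<Rightarrow> real \<Rightarrow> real \<Rightarrow> real \<Rightarrow> real" where
  "Dx1 g x y u p q r s =
     pX g x y u p q + p * pU g x y u p q + r * pP g x y u p q + s * pQ g x y u p q"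

definition Dy1 :: "fn5 \<Rightarrow> real \<Rightarrow> real \<Rightarrow> real \<Rightarrow> real \<Rightarrow> real \<Rightarrow> real \<Rightarrow> real \<Rightarrow> real" where
  "Dy1 g x y u p q s t =
     pY g x y u p q + q * pU g x y u p q + s * pP g x y u p q + t * pQ g x y u p q"

definition Dxx :: "fn5 \<Rightarrow> real \<Rightarrow> real \<Rightarrow> real \<Rightarrow> real \<Rightarrow> real \<Rightarrow> real \<Rightarrow> real \<Rightarrow> real \<Rightarrow> real \<Rightarrow> real" where
  "Dxx g x y u p q r s a b =
     Dx1 (pX g) x y u p q r s
     + r * pU g x y u p q + p * Dx1 (pU g) x y u p q r s
     + a * pP g x y u p q + r * Dx1 (pP g) x y u p q r s
     + b * pQ g x y u p q + s * Dx1 (pQ g) x y u p q r s"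

definition Dxy :: "fn5 \<Rightarrow> real \<Rightarrow> real \<Rightarrow> real \<Rightarrow> real \<Rightarrow> real \<Rightarrow> real \<Rightarrow> real \<Rightarrow> real \<Rightarrow> real \<Rightarrow> real \<Rightarrow> real" where
  "Dxy g x y u p q r s t b c =
     Dx1 (pY g) x y u p q r s
     + s * pU g x y u p q + q * Dx1 (pU g) x y u p q r s
     + b * pP g x y u p q + s * Dx1 (pP g) x y u p q r s
     + c * pQ g x y u p q + t * Dx1 (pQ g) x y u p q r s"

definition Dyy :: "fn5 \<Rightarrow> real \<Rightarrow> real \<Rightarrow> real \<Rightarrow> real \<Rightarrow> real \<Rightarrow> real \<Rightarrow> real \<Rightarrow> real \<Rightarrow> real \<Rightarrow> real" where
  "Dyy g x y u p q s t c d =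
     Dy1 (pY g) x y u p q s t
     + t * pU g x y u p q + q * Dy1 (pU g) x y u p q s t
     + c * pP g x y u p q + s * Dy1 (pP g) x y u p q s t
     + d * pQ g x y u p q + t * Dy1 (pQ g) x y u p q s t"

text \<open>Linearization l_F(phi) = sum_sigma (dF/du_sigma) D_sigma phi of the minimal surface
  equation, evaluated at a third-order jet point.\<close>
definition ellF :: "fn5 \<Rightarrow> real \<Rightarrow> real \<Rightarrow> real \<Rightarrow> real \<Rightarrow> real \<Rightarrow> real \<Rightarrow> real \<Rightarrow> real
                    \<Rightarrow> real \<Rightarrow> real \<Rightarrow> real \<Rightarrow> real \<Rightarrow> real" where
  "ellF g x y u p q r s t a b c d =
     (1 + q^2) * Dxx g x y u p q r s a b
     - 2 * p * q * Dxy g x y u p q r s t b c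
     + (1 + p^2) * Dyy g x y u p q s t c d
     + (2 * p * t - 2 * q * s) * Dx1 g x y u p q r s
     + (2 * q * r - 2 * p * s) * Dy1 g x y u p q s t"

text \<open>Generating sections of contact symmetries: smooth phi(x,y,u,u_x,u_y) with
  l_F(phi) = 0 on the infinite prolongation.  Since l_F(phi) involves jets only up to
  order three, this means vanishing at every third-order jet point satisfying
  F = 0, D_x F = 0, D_y F = 0.\<close>
definition contact_symmetry :: "fn5 \<Rightarrow> bool" where
  "contact_symmetry g \<longleftrightarrow> smooth5 g \<and>
     (\<forall>x y u p q r s t a b c d.
        Fms p q r s t = 0 \<and> DxF p q r s t a b c = 0 \<and> DyF p q r s t b c d = 0
        \<longrightarrow> ellF g x y u p q r s t a b c d = 0)"

definition pq_solution :: "fn5 \<Rightarrow> bool" where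
  "pq_solution g \<longleftrightarrow> smooth5 g \<and> (\<exists>h. g = (\<lambda>x y u p q. h p q)) \<and>
     (\<forall>x y u p q. (1 + p^2) * pP (pP g) x y u p q + 2 * p * q * pQ (pP g) x y u p q
                    + (1 + q^2) * pQ (pQ g) x y u p q = 0)"

end

theory Submission
  imports Defs "HOL-Library.Function_Algebras"
begin

text \<open>Write p = u_x, q = u_y, r = u_xx, s = u_xy, t = u_yy. On the prolongation, t is fixed by
  F = 0 and two of the third derivatives by D_x F = D_y F = 0, while r and s stay free; so
  l_F(g) = 0 says that a polynomial of degree two in r, s vanishes identically. Its coefficients
  are the determining equations: the auxiliary equation Lpq g = 0, a free term, and the
  coefficients of r and s. Differentiating and combining them shows that the second derivatives
  of g in x, y, u vanish, that nu g = g_u - p g_x - q g_y is a constant multiple of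
  1 + p^2 + q^2, and then that g_x and g_y are affine in (p, q) with the skew structure of an
  infinitesimal rotation. Subtracting the matching combination of the four explicit sections
  leaves a function of (p, q) alone, which solves the auxiliary equation. Conversely, every such
  combination satisfies the determining equations.\<close>

section \<open>Functions on the space of first-order jets\<close>

definition cX :: fn5 where "cX = (\<lambda>x y u p q. x)"
definition cY :: fn5 where "cY = (\<lambda>x y u p q. y)"
definition cU :: fn5 where "cU = (\<lambda>x y u p q. u)"
definition cP :: fn5 where "cP = (\<lambda>x y u p q. p)"
definition cQ :: fn5 where "cQ = (\<lambda>x y u p q. q)"
definition cst :: "real \<Rightarrow> fn5" where "cst c = (\<lambda>x y u p q. c)"

lemma coord_apply [simp]:
  "cX x y u p q = x" "cY x y u p q = y" "cU x y u p q = u" "cP x y u p q = p" "cQ x y u p q = q"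
  "cst c x y u p q = c"
  by (simp_all add: cX_def cY_def cU_def cP_def cQ_def cst_def)

lemma cst_eq [simp]: "cst 0 = 0" "cst 1 = 1" "cst (numeral n) = numeral n"
  by (auto simp: cst_def fun_eq_iff)

lemma cont5_iff_continuous_on:
  "cont5 f \<longleftrightarrow> continuous_on UNIV
     (\<lambda>z. f (fst z) (fst (snd z)) (fst (snd (snd z))) (fst (snd (snd (snd z))))
        (snd (snd (snd (snd z)))))"
  by (simp add: cont5_def case_prod_beta)

lemma continuous_on_cont5_compose [continuous_intros]:
  assumes "cont5 h" "continuous_on S a" "continuous_on S b" "continuous_on S c"
    "continuous_on S d" "continuous_on S e"
  shows "continuous_on S (\<lambda>z. h (a z) (b z) (c z) (d z) (e z))"
proof -
  have "continuous_on S (\<lambda>z. (a z, b z, c z, d z, e z))"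
    using assms(2-) by (intro continuous_intros)
  from continuous_on_compose2[OF assms(1)[unfolded cont5_def] this] show ?thesis
    by simp
qed

lemma cont5_add: "cont5 f \<Longrightarrow> cont5 g \<Longrightarrow> cont5 (f + g)"
  and cont5_mult: "cont5 f \<Longrightarrow> cont5 g \<Longrightarrow> cont5 (f * g)"
  and cont5_minus: "cont5 f \<Longrightarrow> cont5 (- f)"
  and cont5_diff: "cont5 f \<Longrightarrow> cont5 g \<Longrightarrow> cont5 (f - g)"
  and cont5_cst: "cont5 (cst c)"
  and cont5_coords: "cont5 cX" "cont5 cY" "cont5 cU" "cont5 cP" "cont5 cQ"
  unfolding cont5_iff_continuous_on by (auto intro!: continuous_intros)

lemma has_partials:
  assumes "partials_exist f"
  shows "((\<lambda>v. f v y u p q) has_real_derivative pX f x y u p q) (at x)"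
    "((\<lambda>v. f x v u p q) has_real_derivative pY f x y u p q) (at y)"
    "((\<lambda>v. f x y v p q) has_real_derivative pU f x y u p q) (at u)"
    "((\<lambda>v. f x y u v q) has_real_derivative pP f x y u p q) (at p)"
    "((\<lambda>v. f x y u p v) has_real_derivative pQ f x y u p q) (at q)"
  using assms unfolding partials_exist_def pX_def pY_def pU_def pP_def pQ_def
  by (simp_all add: DERIV_deriv_iff_real_differentiable)

lemma partials_eqI:
  assumes "\<And>x y u p q. ((\<lambda>v. f v y u p q) has_real_derivative fx x y u p q) (at x)"
    "\<And>x y u p q. ((\<lambda>v. f x v u p q) has_real_derivative fy x y u p q) (at y)"
    "\<And>x y u p q. ((\<lambda>v. f x y v p q) has_real_derivative fu x y u p q) (at u)"
    "\<And>x y u p q. ((\<lambda>v. f x y u v q) has_real_derivative fp x y u p q) (at p)"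
    "\<And>x y u p q. ((\<lambda>v. f x y u p v) has_real_derivative fq x y u p q) (at q)"
  shows "partials_exist f \<and> pX f = fx \<and> pY f = fy \<and> pU f = fu \<and> pP f = fp \<and> pQ f = fq"
proof (intro conjI)
  show "partials_exist f"
    unfolding partials_exist_def using assms real_differentiable_def by meson
  show "pX f = fx" "pY f = fy" "pU f = fu" "pP f = fp" "pQ f = fq"
    unfolding pX_def pY_def pU_def pP_def pQ_def by (intro ext DERIV_imp_deriv assms)+
qed

lemma DERIV_mult_rev:
  assumes "(f has_real_derivative f') (at x)" "(g has_real_derivative g') (at x)"
  shows "((\<lambda>v. f v * g v) has_real_derivative f' * g x + f x * g') (at x)"
  using DERIV_mult[OF assms] by (simp add: mult.commute)

text \<open>Needed because the q-slice \<open>\<lambda>v. (f * g) x y u p v\<close> is eta-contracted to a product of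
  functions.\<close>

lemma DERIV_times_fun:
  assumes "(f has_real_derivative f') (at x)" "(g has_real_derivative g') (at x)"
  shows "(f * g has_real_derivative f' * g x + f x * g') (at x)"
  using DERIV_mult_rev[OF assms] by (simp add: times_fun_def)

lemma partials_add:
  assumes "partials_exist f" "partials_exist g"
  shows "partials_exist (f + g) \<and> pX (f + g) = pX f + pX g \<and> pY (f + g) = pY f + pY g \<and>
    pU (f + g) = pU f + pU g \<and> pP (f + g) = pP f + pP g \<and> pQ (f + g) = pQ f + pQ g"
  by (rule partials_eqI) (simp_all add: DERIV_add has_partials assms)

lemma partials_minus:
  assumes "partials_exist f"
  shows "partials_exist (- f) \<and> pX (- f) = - pX f \<and> pY (- f) = - pY f \<and>
    pU (- f) = - pU f \<and> pP (- f) = - pP f \<and> pQ (- f) = - pQ f"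
  by (rule partials_eqI) (simp_all add: DERIV_minus has_partials assms)

lemma partials_diff:
  assumes "partials_exist f" "partials_exist g"
  shows "partials_exist (f - g) \<and> pX (f - g) = pX f - pX g \<and> pY (f - g) = pY f - pY g \<and>
    pU (f - g) = pU f - pU g \<and> pP (f - g) = pP f - pP g \<and> pQ (f - g) = pQ f - pQ g"
  by (rule partials_eqI) (simp_all add: DERIV_diff has_partials assms)

lemma partials_mult:
  assumes "partials_exist f" "partials_exist g"
  shows "partials_exist (f * g) \<and> pX (f * g) = pX f * g + f * pX g \<and>
    pY (f * g) = pY f * g + f * pY g \<and> pU (f * g) = pU f * g + f * pU g \<and>
    pP (f * g) = pP f * g + f * pP g \<and> pQ (f * g) = pQ f * g + f * pQ g"
  by (rule partials_eqI; simp only: times_fun_apply plus_fun_apply;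
      intro DERIV_mult_rev DERIV_times_fun has_partials assms)

lemma partials_cst: "partials_exist (cst c) \<and> pX (cst c) = 0 \<and> pY (cst c) = 0 \<and>
    pU (cst c) = 0 \<and> pP (cst c) = 0 \<and> pQ (cst c) = 0"
  by (rule partials_eqI) simp_all

lemma partials_coords:
  "partials_exist cX \<and> pX cX = 1 \<and> pY cX = 0 \<and> pU cX = 0 \<and> pP cX = 0 \<and> pQ cX = 0"
  "partials_exist cY \<and> pX cY = 0 \<and> pY cY = 1 \<and> pU cY = 0 \<and> pP cY = 0 \<and> pQ cY = 0"
  "partials_exist cU \<and> pX cU = 0 \<and> pY cU = 0 \<and> pU cU = 1 \<and> pP cU = 0 \<and> pQ cU = 0"
  "partials_exist cP \<and> pX cP = 0 \<and> pY cP = 0 \<and> pU cP = 0 \<and> pP cP = 1 \<and> pQ cP = 0"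
  "partials_exist cQ \<and> pX cQ = 0 \<and> pY cQ = 0 \<and> pU cQ = 0 \<and> pP cQ = 0 \<and> pQ cQ = 1"
  by (rule partials_eqI; simp)+

lemmas Ck_Suc = Ck.simps(2)
declare Ck.simps(2) [simp del]

lemma Ck_Suc_imp_Ck: "Ck (Suc k) f \<Longrightarrow> Ck k f"
proof (induction k arbitrary: f)
  case 0
  then show ?case by (simp only: Ck_Suc Ck.simps(1))
next
  case (Suc k)
  then show ?case unfolding Ck_Suc[of "Suc k"] Ck_Suc[of k] by blast
qed

lemma Ck_add: "Ck k f \<Longrightarrow> Ck k g \<Longrightarrow> Ck k (f + g)"
proof (induction k arbitrary: f g)
  case 0
  then show ?case by (simp only: Ck.simps(1) cont5_add)
next
  case (Suc k)
  then show ?case unfolding Ck_Suc using partials_add[of f g] cont5_add by metis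
qed

lemma Ck_diff: "Ck k f \<Longrightarrow> Ck k g \<Longrightarrow> Ck k (f - g)"
proof (induction k arbitrary: f g)
  case 0
  then show ?case by (simp only: Ck.simps(1) cont5_diff)
next
  case (Suc k)
  then show ?case unfolding Ck_Suc using partials_diff[of f g] cont5_diff by metis
qed

lemma Ck_minus: "Ck k f \<Longrightarrow> Ck k (- f)"
proof (induction k arbitrary: f)
  case 0
  then show ?case by (simp only: Ck.simps(1) cont5_minus)
next
  case (Suc k)
  then show ?case unfolding Ck_Suc using partials_minus[of f] cont5_minus by metis
qed

lemma Ck_mult: "Ck k f \<Longrightarrow> Ck k g \<Longrightarrow> Ck k (f * g)"
proof (induction k arbitrary: f g)
  case 0
  then show ?case by (simp only: Ck.simps(1) cont5_mult)
next
  case (Suc k)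
  have "Ck k f" "Ck k g"
    using Suc.prems Ck_Suc_imp_Ck by blast+
  moreover note partials_mult[of f g]
  ultimately show ?case
    using Suc.prems unfolding Ck_Suc by (simp add: cont5_mult Ck_add Suc.IH)
qed

lemma Ck_cst: "Ck k (cst c)"
proof (induction k arbitrary: c)
  case 0
  then show ?case by (simp only: Ck.simps(1) cont5_cst)
next
  case (Suc k)
  have "Ck k 0"
    using Suc.IH[of 0] by (simp only: cst_eq)
  then show ?case by (simp only: Ck_Suc cont5_cst partials_cst simp_thms)
qed

lemma Ck_numerals: "Ck k 0" "Ck k 1"
  using Ck_cst[of k 0] Ck_cst[of k 1] by (simp_all only: cst_eq)

lemma Ck_coords: "Ck k cX" "Ck k cY" "Ck k cU" "Ck k cP" "Ck k cQ"
  by (cases k; simp only: Ck.simps(1) Ck_Suc cont5_coords partials_coords Ck_numerals simp_thms)+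

lemma smooth5_add [simp]: "smooth5 f \<Longrightarrow> smooth5 g \<Longrightarrow> smooth5 (f + g)"
  and smooth5_diff [simp]: "smooth5 f \<Longrightarrow> smooth5 g \<Longrightarrow> smooth5 (f - g)"
  and smooth5_minus [simp]: "smooth5 f \<Longrightarrow> smooth5 (- f)"
  and smooth5_mult [simp]: "smooth5 f \<Longrightarrow> smooth5 g \<Longrightarrow> smooth5 (f * g)"
  and smooth5_cst [simp]: "smooth5 (cst c)"
  and smooth5_coords [simp]: "smooth5 cX" "smooth5 cY" "smooth5 cU" "smooth5 cP" "smooth5 cQ"
  by (simp_all add: smooth5_def Ck_add Ck_diff Ck_minus Ck_mult Ck_cst Ck_coords)

lemma smooth5_numerals [simp]: "smooth5 0" "smooth5 1" "smooth5 (numeral n)"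
  using smooth5_cst[of 0] smooth5_cst[of 1] smooth5_cst[of "numeral n"] by simp_all

lemma smooth5_partials [simp]:
  assumes "smooth5 f"
  shows "smooth5 (pX f)" "smooth5 (pY f)" "smooth5 (pU f)" "smooth5 (pP f)" "smooth5 (pQ f)"
  using assms unfolding smooth5_def by (metis Ck_Suc)+

lemma smooth5_imp_partials_exist: "smooth5 f \<Longrightarrow> partials_exist f"
  and smooth5_imp_cont5: "smooth5 f \<Longrightarrow> cont5 f"
  unfolding smooth5_def by (metis Ck_Suc)+

lemmas smooth5_has_partials = has_partials[OF smooth5_imp_partials_exist]

lemma partial_rules [simp]:
  assumes "smooth5 f" "smooth5 g"
  shows "pX (f + g) = pX f + pX g" "pY (f + g) = pY f + pY g" "pU (f + g) = pU f + pU g"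
    "pP (f + g) = pP f + pP g" "pQ (f + g) = pQ f + pQ g"
    "pX (f - g) = pX f - pX g" "pY (f - g) = pY f - pY g" "pU (f - g) = pU f - pU g"
    "pP (f - g) = pP f - pP g" "pQ (f - g) = pQ f - pQ g"
    "pX (f * g) = pX f * g + f * pX g" "pY (f * g) = pY f * g + f * pY g"
    "pU (f * g) = pU f * g + f * pU g" "pP (f * g) = pP f * g + f * pP g"
    "pQ (f * g) = pQ f * g + f * pQ g"
  using partials_add partials_diff partials_mult smooth5_imp_partials_exist[OF assms(1)]
    smooth5_imp_partials_exist[OF assms(2)] by auto

lemma partial_minus_rules [simp]:
  assumes "smooth5 f"
  shows "pX (- f) = - pX f" "pY (- f) = - pY f" "pU (- f) = - pU f" "pP (- f) = - pP f"
    "pQ (- f) = - pQ f"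
  using partials_minus smooth5_imp_partials_exist[OF assms] by auto

lemma partial_coords [simp]:
  "pX cX = 1" "pY cX = 0" "pU cX = 0" "pP cX = 0" "pQ cX = 0"
  "pX cY = 0" "pY cY = 1" "pU cY = 0" "pP cY = 0" "pQ cY = 0"
  "pX cU = 0" "pY cU = 0" "pU cU = 1" "pP cU = 0" "pQ cU = 0"
  "pX cP = 0" "pY cP = 0" "pU cP = 0" "pP cP = 1" "pQ cP = 0"
  "pX cQ = 0" "pY cQ = 0" "pU cQ = 0" "pP cQ = 0" "pQ cQ = 1"
  using partials_coords by simp_all

lemma partial_constants [simp]:
  "pX (cst c) = 0" "pY (cst c) = 0" "pU (cst c) = 0" "pP (cst c) = 0" "pQ (cst c) = 0"
  "pX 0 = 0" "pY 0 = 0" "pU 0 = 0" "pP 0 = 0" "pQ 0 = 0"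
  "pX 1 = 0" "pY 1 = 0" "pU 1 = 0" "pP 1 = 0" "pQ 1 = 0"
  "pX (numeral n) = 0" "pY (numeral n) = 0" "pU (numeral n) = 0" "pP (numeral n) = 0"
  "pQ (numeral n) = 0"
  using partials_cst[of c] partials_cst[of 0] partials_cst[of 1] partials_cst[of "numeral n"]
  by simp_all

lemma fn5_mult_eq_0_cancel:
  assumes "c * f = (0 :: fn5)" "\<And>x y u p q. c x y u p q \<noteq> 0"
  shows "f = 0"
proof (intro ext)
  fix x y u p q
  have "(c * f) x y u p q = 0"
    by (simp only: assms(1) zero_fun_apply)
  then show "f x y u p q = 0 x y u p q"
    using assms(2)[of x y u p q] by simp
qed

lemma constant_in_xyu:
  fixes f :: fn5
  assumes "\<And>x y u p q. ((\<lambda>v. f v y u p q) has_real_derivative 0) (at x)"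
    "\<And>x y u p q. ((\<lambda>v. f x v u p q) has_real_derivative 0) (at y)"
    "\<And>x y u p q. ((\<lambda>v. f x y v p q) has_real_derivative 0) (at u)"
  shows "f x y u p q = f 0 0 0 p q"
proof -
  have "f x y u p q = f 0 y u p q"
    using DERIV_isconst_all[of "\<lambda>v. f v y u p q" x 0] assms(1) by blast
  also have "\<dots> = f 0 0 u p q"
    using DERIV_isconst_all[of "\<lambda>v. f 0 v u p q" y 0] assms(2) by blast
  also have "\<dots> = f 0 0 0 p q"
    using DERIV_isconst_all[of "\<lambda>v. f 0 0 v p q" u 0] assms(3) by blast
  finally show ?thesis .
qed

lemma constant_if_zero_derivatives:
  fixes f :: fn5
  assumes "\<And>x y u p q. ((\<lambda>v. f v y u p q) has_real_derivative 0) (at x)"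
    "\<And>x y u p q. ((\<lambda>v. f x v u p q) has_real_derivative 0) (at y)"
    "\<And>x y u p q. ((\<lambda>v. f x y v p q) has_real_derivative 0) (at u)"
    "\<And>x y u p q. ((\<lambda>v. f x y u v q) has_real_derivative 0) (at p)"
    "\<And>x y u p q. ((\<lambda>v. f x y u p v) has_real_derivative 0) (at q)"
  shows "f x y u p q = f 0 0 0 0 0"
proof -
  have "f x y u p q = f 0 0 0 p q"
    using assms(1-3) by (rule constant_in_xyu)
  also have "\<dots> = f 0 0 0 0 q"
    using DERIV_isconst_all[of "\<lambda>v. f 0 0 0 v q" p 0] assms(4) by blast
  also have "\<dots> = f 0 0 0 0 0"
    using DERIV_isconst_all[of "\<lambda>v. f 0 0 0 0 v" q 0] assms(5) by blast
  finally show ?thesis .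
qed

lemma smooth5_constant:
  assumes "smooth5 f" "pX f = 0" "pY f = 0" "pU f = 0" "pP f = 0" "pQ f = 0"
  shows "f = cst (f 0 0 0 0 0)"
proof (intro ext)
  fix x y u p q
  show "f x y u p q = cst (f 0 0 0 0 0) x y u p q"
    unfolding coord_apply
    by (rule constant_if_zero_derivatives) (use smooth5_has_partials[OF assms(1)] assms(2-) in auto)
qed

lemma smooth5_eqI_partials:
  assumes "smooth5 f" "smooth5 g" "pX f = pX g" "pY f = pY g" "pU f = pU g" "pP f = pP g"
    "pQ f = pQ g" "f 0 0 0 0 0 = g 0 0 0 0 0"
  shows "f = g"
proof -
  have "f - g = cst ((f - g) 0 0 0 0 0)"
    using assms by (intro smooth5_constant) simp_all
  then show ?thesis
    using assms(8) by (simp add: cst_def fun_eq_iff)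
qed

section \<open>Symmetry of second derivatives\<close>

lemma second_difference_MVT:
  fixes F Fs Fst :: "real \<Rightarrow> real \<Rightarrow> real"
  assumes Fs: "\<And>s t. ((\<lambda>a. F a t) has_real_derivative Fs s t) (at s)"
    and Fst: "\<And>s t. ((\<lambda>b. Fs s b) has_real_derivative Fst s t) (at t)"
    and h: "h > 0"
  obtains a b where "s < a" "a < s + h" "t < b" "b < t + h"
    "F (s + h) (t + h) - F (s + h) t - F s (t + h) + F s t = h * h * Fst a b"
proof -
  have "((\<lambda>a. F a (t + h) - F a t) has_real_derivative Fs x (t + h) - Fs x t) (at x)" for x
    by (intro DERIV_diff Fs)
  then obtain a where a: "s < a" "a < s + h"
    "(F (s + h) (t + h) - F (s + h) t) - (F s (t + h) - F s t) = h * (Fs a (t + h) - Fs a t)"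
    using MVT2[of s "s + h" "\<lambda>a. F a (t + h) - F a t" "\<lambda>a. Fs a (t + h) - Fs a t"] h
    by auto
  obtain b where b: "t < b" "b < t + h" "Fs a (t + h) - Fs a t = h * Fst a b"
    using MVT2[of t "t + h" "\<lambda>b. Fs a b" "\<lambda>b. Fst a b"] h Fst by auto
  show thesis
    by (rule that[OF a(1,2) b(1,2)]) (use a(3) b(3) in \<open>simp add: algebra_simps\<close>)
qed

text \<open>Both mixed partials equal the second difference of F over a square of side h at
  (s0, t0), divided by h^2, at some points of that square; continuity then forces them to agree.\<close>

lemma mixed_partials_commute:
  fixes F Fs Ft Fst Fts :: "real \<Rightarrow> real \<Rightarrow> real"
  assumes Fs: "\<And>s t. ((\<lambda>a. F a t) has_real_derivative Fs s t) (at s)"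
    and Ft: "\<And>s t. ((\<lambda>b. F s b) has_real_derivative Ft s t) (at t)"
    and Fst: "\<And>s t. ((\<lambda>b. Fs s b) has_real_derivative Fst s t) (at t)"
    and Fts: "\<And>s t. ((\<lambda>a. Ft a t) has_real_derivative Fts s t) (at s)"
    and cont_st: "continuous_on UNIV (\<lambda>z. Fst (fst z) (snd z))"
    and cont_ts: "continuous_on UNIV (\<lambda>z. Fts (fst z) (snd z))"
  shows "Fst s0 t0 = Fts s0 t0"
proof (rule ccontr)
  assume "Fst s0 t0 \<noteq> Fts s0 t0"
  define e where "e = \<bar>Fst s0 t0 - Fts s0 t0\<bar> / 2"
  have "e > 0"
    using \<open>Fst s0 t0 \<noteq> Fts s0 t0\<close> by (simp add: e_def)
  have "continuous (at (s0, t0)) (\<lambda>z. Fst (fst z) (snd z))"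
    "continuous (at (s0, t0)) (\<lambda>z. Fts (fst z) (snd z))"
    using cont_st cont_ts by (simp_all add: continuous_on_eq_continuous_at)
  then obtain d1 d2 where "d1 > 0" "d2 > 0"
    and d1: "\<And>z. dist z (s0, t0) < d1 \<Longrightarrow> dist (Fst (fst z) (snd z)) (Fst s0 t0) < e"
    and d2: "\<And>z. dist z (s0, t0) < d2 \<Longrightarrow> dist (Fts (fst z) (snd z)) (Fts s0 t0) < e"
    using \<open>e > 0\<close> unfolding continuous_at_eps_delta by (metis fst_conv snd_conv)
  define h where "h = min d1 d2 / 2"
  have "h > 0"
    using \<open>d1 > 0\<close> \<open>d2 > 0\<close> by (simp add: h_def)
  have near: "dist (a, b) (s0, t0) < min d1 d2"
    if "s0 < a" "a < s0 + h" "t0 < b" "b < t0 + h" for a b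
  proof -
    have "dist (a, b) (s0, t0) \<le> \<bar>a - s0\<bar> + \<bar>b - t0\<bar>"
      using sqrt_sum_squares_le_sum_abs by (simp add: dist_Pair_Pair dist_real_def)
    also have "\<dots> < 2 * h"
      using that by simp
    finally show ?thesis by (simp add: h_def)
  qed
  obtain a1 b1 where ab1: "s0 < a1" "a1 < s0 + h" "t0 < b1" "b1 < t0 + h"
    "F (s0 + h) (t0 + h) - F (s0 + h) t0 - F s0 (t0 + h) + F s0 t0 = h * h * Fst a1 b1"
    using second_difference_MVT[of F Fs Fst, OF Fs Fst \<open>h > 0\<close>] by blast
  obtain b2 a2 where ab2: "t0 < b2" "b2 < t0 + h" "s0 < a2" "a2 < s0 + h"
    "F (s0 + h) (t0 + h) - F s0 (t0 + h) - F (s0 + h) t0 + F s0 t0 = h * h * Fts a2 b2"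
    using second_difference_MVT[of "\<lambda>b a. F a b" "\<lambda>b a. Ft a b" "\<lambda>b a. Fts a b",
        OF Ft Fts \<open>h > 0\<close>]
    by blast
  have "h * h * Fst a1 b1 = h * h * Fts a2 b2"
    using ab1(5) ab2(5) by linarith
  then have "Fst a1 b1 = Fts a2 b2"
    using \<open>h > 0\<close> by simp
  moreover have "dist (Fst a1 b1) (Fst s0 t0) < e" "dist (Fts a2 b2) (Fts s0 t0) < e"
    using d1[of "(a1, b1)"] d2[of "(a2, b2)"] near[OF ab1(1-4)] near[OF ab2(3,4,1,2)] by auto
  ultimately show False
    unfolding e_def dist_real_def by (auto simp: abs_if split: if_split_asm)
qed

lemma smooth5_partials_commute_at:
  assumes f: "smooth5 f"
  shows "pY (pX f) x y u p q = pX (pY f) x y u p q"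
    "pU (pX f) x y u p q = pX (pU f) x y u p q"
    "pP (pX f) x y u p q = pX (pP f) x y u p q"
    "pQ (pX f) x y u p q = pX (pQ f) x y u p q"
    "pU (pY f) x y u p q = pY (pU f) x y u p q"
    "pP (pY f) x y u p q = pY (pP f) x y u p q"
    "pQ (pY f) x y u p q = pY (pQ f) x y u p q"
    "pP (pU f) x y u p q = pU (pP f) x y u p q"
    "pQ (pU f) x y u p q = pU (pQ f) x y u p q"
    "pQ (pP f) x y u p q = pP (pQ f) x y u p q"
proof -
  note has = smooth5_has_partials and df = smooth5_partials[OF f]
  show "pY (pX f) x y u p q = pX (pY f) x y u p q"
    by (rule mixed_partials_commute[where F="\<lambda>s t. f s t u p q"
          and Fst="\<lambda>s t. pY (pX f) s t u p q" and Fts="\<lambda>s t. pX (pY f) s t u p q",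
          OF has(1)[OF f] has(2)[OF f] has(2)[OF df(1)] has(1)[OF df(2)]])
      (rule continuous_on_cont5_compose[of _ UNIV fst snd "\<lambda>_. u" "\<lambda>_. p" "\<lambda>_. q"];
        simp add: continuous_on_fst continuous_on_snd smooth5_imp_cont5 f)+
  show "pU (pX f) x y u p q = pX (pU f) x y u p q"
    by (rule mixed_partials_commute[where F="\<lambda>s t. f s y t p q"
          and Fst="\<lambda>s t. pU (pX f) s y t p q" and Fts="\<lambda>s t. pX (pU f) s y t p q",
          OF has(1)[OF f] has(3)[OF f] has(3)[OF df(1)] has(1)[OF df(3)]])
      (rule continuous_on_cont5_compose[of _ UNIV fst "\<lambda>_. y" snd "\<lambda>_. p" "\<lambda>_. q"];
        simp add: continuous_on_fst continuous_on_snd smooth5_imp_cont5 f)+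
  show "pP (pX f) x y u p q = pX (pP f) x y u p q"
    by (rule mixed_partials_commute[where F="\<lambda>s t. f s y u t q"
          and Fst="\<lambda>s t. pP (pX f) s y u t q" and Fts="\<lambda>s t. pX (pP f) s y u t q",
          OF has(1)[OF f] has(4)[OF f] has(4)[OF df(1)] has(1)[OF df(4)]])
      (rule continuous_on_cont5_compose[of _ UNIV fst "\<lambda>_. y" "\<lambda>_. u" snd "\<lambda>_. q"];
        simp add: continuous_on_fst continuous_on_snd smooth5_imp_cont5 f)+
  show "pQ (pX f) x y u p q = pX (pQ f) x y u p q"
    by (rule mixed_partials_commute[where F="\<lambda>s t. f s y u p t"
          and Fst="\<lambda>s t. pQ (pX f) s y u p t" and Fts="\<lambda>s t. pX (pQ f) s y u p t",
          OF has(1)[OF f] has(5)[OF f] has(5)[OF df(1)] has(1)[OF df(5)]])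
      (rule continuous_on_cont5_compose[of _ UNIV fst "\<lambda>_. y" "\<lambda>_. u" "\<lambda>_. p" snd];
        simp add: continuous_on_fst continuous_on_snd smooth5_imp_cont5 f)+
  show "pU (pY f) x y u p q = pY (pU f) x y u p q"
    by (rule mixed_partials_commute[where F="\<lambda>s t. f x s t p q"
          and Fst="\<lambda>s t. pU (pY f) x s t p q" and Fts="\<lambda>s t. pY (pU f) x s t p q",
          OF has(2)[OF f] has(3)[OF f] has(3)[OF df(2)] has(2)[OF df(3)]])
      (rule continuous_on_cont5_compose[of _ UNIV "\<lambda>_. x" fst snd "\<lambda>_. p" "\<lambda>_. q"];
        simp add: continuous_on_fst continuous_on_snd smooth5_imp_cont5 f)+
  show "pP (pY f) x y u p q = pY (pP f) x y u p q"
    by (rule mixed_partials_commute[where F="\<lambda>s t. f x s u t q"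
          and Fst="\<lambda>s t. pP (pY f) x s u t q" and Fts="\<lambda>s t. pY (pP f) x s u t q",
          OF has(2)[OF f] has(4)[OF f] has(4)[OF df(2)] has(2)[OF df(4)]])
      (rule continuous_on_cont5_compose[of _ UNIV "\<lambda>_. x" fst "\<lambda>_. u" snd "\<lambda>_. q"];
        simp add: continuous_on_fst continuous_on_snd smooth5_imp_cont5 f)+
  show "pQ (pY f) x y u p q = pY (pQ f) x y u p q"
    by (rule mixed_partials_commute[where F="\<lambda>s t. f x s u p t"
          and Fst="\<lambda>s t. pQ (pY f) x s u p t" and Fts="\<lambda>s t. pY (pQ f) x s u p t",
          OF has(2)[OF f] has(5)[OF f] has(5)[OF df(2)] has(2)[OF df(5)]])
      (rule continuous_on_cont5_compose[of _ UNIV "\<lambda>_. x" fst "\<lambda>_. u" "\<lambda>_. p" snd];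
        simp add: continuous_on_fst continuous_on_snd smooth5_imp_cont5 f)+
  show "pP (pU f) x y u p q = pU (pP f) x y u p q"
    by (rule mixed_partials_commute[where F="\<lambda>s t. f x y s t q"
          and Fst="\<lambda>s t. pP (pU f) x y s t q" and Fts="\<lambda>s t. pU (pP f) x y s t q",
          OF has(3)[OF f] has(4)[OF f] has(4)[OF df(3)] has(3)[OF df(4)]])
      (rule continuous_on_cont5_compose[of _ UNIV "\<lambda>_. x" "\<lambda>_. y" fst snd "\<lambda>_. q"];
        simp add: continuous_on_fst continuous_on_snd smooth5_imp_cont5 f)+
  show "pQ (pU f) x y u p q = pU (pQ f) x y u p q"
    by (rule mixed_partials_commute[where F="\<lambda>s t. f x y s p t"
          and Fst="\<lambda>s t. pQ (pU f) x y s p t" and Fts="\<lambda>s t. pU (pQ f) x y s p t",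
          OF has(3)[OF f] has(5)[OF f] has(5)[OF df(3)] has(3)[OF df(5)]])
      (rule continuous_on_cont5_compose[of _ UNIV "\<lambda>_. x" "\<lambda>_. y" fst "\<lambda>_. p" snd];
        simp add: continuous_on_fst continuous_on_snd smooth5_imp_cont5 f)+
  show "pQ (pP f) x y u p q = pP (pQ f) x y u p q"
    by (rule mixed_partials_commute[where F="\<lambda>s t. f x y u s t"
          and Fst="\<lambda>s t. pQ (pP f) x y u s t" and Fts="\<lambda>s t. pP (pQ f) x y u s t",
          OF has(4)[OF f] has(5)[OF f] has(5)[OF df(4)] has(4)[OF df(5)]])
      (rule continuous_on_cont5_compose[of _ UNIV "\<lambda>_. x" "\<lambda>_. y" "\<lambda>_. u" fst snd];
        simp add: continuous_on_fst continuous_on_snd smooth5_imp_cont5 f)+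
qed

lemma smooth5_partials_commute [simp]:
  assumes "smooth5 f"
  shows "pY (pX f) = pX (pY f)" "pU (pX f) = pX (pU f)" "pP (pX f) = pX (pP f)"
    "pQ (pX f) = pX (pQ f)" "pU (pY f) = pY (pU f)" "pP (pY f) = pY (pP f)"
    "pQ (pY f) = pY (pQ f)" "pP (pU f) = pU (pP f)" "pQ (pU f) = pU (pQ f)"
    "pQ (pP f) = pP (pQ f)"
  using smooth5_partials_commute_at[OF assms] by (simp_all add: fun_eq_iff)

section \<open>The determining equations\<close>

abbreviation P2 :: fn5 where "P2 \<equiv> 1 + cP * cP"
abbreviation Q2 :: fn5 where "Q2 \<equiv> 1 + cQ * cQ"
abbreviation W :: fn5 where "W \<equiv> 1 + cP * cP + cQ * cQ"

lemma weights_nonzero: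
  fixes p q :: real
  shows "1 + p * p \<noteq> 0" "1 + q * q \<noteq> 0" "1 + p * p + q * q \<noteq> 0"
  using zero_le_square[of p] zero_le_square[of q] by linarith+

lemma weight_mult_eq_0_iff:
  "W * f = 0 \<longleftrightarrow> f = 0" "P2 * f = 0 \<longleftrightarrow> f = 0" "Q2 * f = 0 \<longleftrightarrow> f = 0"
  "numeral n * f = 0 \<longleftrightarrow> f = 0"
  using fn5_mult_eq_0_cancel[of W f] fn5_mult_eq_0_cancel[of P2 f] fn5_mult_eq_0_cancel[of Q2 f]
    fn5_mult_eq_0_cancel[of "numeral n" f] weights_nonzero by auto

text \<open>hX and hY are the total derivatives D_x and D_y without their second-order terms
  r g_p + s g_q and s g_p + t g_q.\<close>

definition hX :: "fn5 \<Rightarrow> fn5" where "hX g = pX g + cP * pU g"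
definition hY :: "fn5 \<Rightarrow> fn5" where "hY g = pY g + cQ * pU g"

definition lin_r :: "fn5 \<Rightarrow> fn5" where
  "lin_r g = cQ * hY g + Q2 * hX (pP g) - cP * cQ * hY (pP g)"
definition lin_s :: "fn5 \<Rightarrow> fn5" where
  "lin_s g = - cQ * hX g - cP * hY g + Q2 * hX (pQ g) - cP * cQ * hY (pQ g)
     - cP * cQ * hX (pP g) + P2 * hY (pP g)"
definition lin_t :: "fn5 \<Rightarrow> fn5" where
  "lin_t g = cP * hX g - cP * cQ * hX (pQ g) + P2 * hY (pQ g)"
definition free_term :: "fn5 \<Rightarrow> fn5" where
  "free_term g = Q2 * hX (hX g) - 2 * cP * cQ * hX (hY g) + P2 * hY (hY g)"
definition Lpq :: "fn5 \<Rightarrow> fn5" where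
  "Lpq g = P2 * pP (pP g) + 2 * cP * cQ * pP (pQ g) + Q2 * pQ (pQ g)"

text \<open>coeff_r and coeff_s are (1 + p^2) times the coefficients of r and s in l_F(g) once t
  is eliminated using F = 0.\<close>

definition coeff_r :: "fn5 \<Rightarrow> fn5" where "coeff_r g = P2 * lin_r g - Q2 * lin_t g"
definition coeff_s :: "fn5 \<Rightarrow> fn5" where "coeff_s g = P2 * lin_s g + 2 * cP * cQ * lin_t g"

definition determining_eqs :: "fn5 \<Rightarrow> bool" where
  "determining_eqs g \<longleftrightarrow> free_term g = 0 \<and> Lpq g = 0 \<and> coeff_r g = 0 \<and> coeff_s g = 0"

lemmas jet_operator_defs = hX_def hY_def lin_r_def lin_s_def lin_t_def free_term_def Lpq_def
  coeff_r_def coeff_s_def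

lemma ellF_expansion:
  assumes "smooth5 g"
  shows "ellF g x y u p q r s t a b c d =
    (s\<^sup>2 - r * t) * Lpq g x y u p q
    + 2 * (lin_r g x y u p q * r + lin_s g x y u p q * s + lin_t g x y u p q * t)
    + free_term g x y u p q
    + pP g x y u p q * DxF p q r s t a b c + pQ g x y u p q * DyF p q r s t b c d
    + (r * pP (pP g) x y u p q + 2 * s * pP (pQ g) x y u p q + t * pQ (pQ g) x y u p q
       + pU g x y u p q) * Fms p q r s t"
  using assms
  unfolding ellF_def Dxx_def Dxy_def Dyy_def Dx1_def Dy1_def Fms_def DxF_def DyF_def jet_operator_defs
  by (simp add: power2_eq_square) algebra

lemma prolongation_point_exists:
  fixes p q r s :: real
  obtains t c d where "Fms p q r s t = 0" "DxF p q r s t 0 0 c = 0" "DyF p q r s t 0 c d = 0"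
    "(1 + p\<^sup>2) * t = 2 * p * q * s - (1 + q\<^sup>2) * r"
proof
  have "1 + p\<^sup>2 \<noteq> 0"
    using zero_le_power2[of p] by linarith
  define t where "t = (2 * p * q * s - (1 + q\<^sup>2) * r) / (1 + p\<^sup>2)"
  define c where "c = - DxF p q r s t 0 0 0 / (1 + p\<^sup>2)"
  define d where "d = - DyF p q r s t 0 c 0 / (1 + p\<^sup>2)"
  show "(1 + p\<^sup>2) * t = 2 * p * q * s - (1 + q\<^sup>2) * r"
    using \<open>1 + p\<^sup>2 \<noteq> 0\<close> by (simp add: t_def)
  then show "Fms p q r s t = 0"
    unfolding Fms_def by (simp add: algebra_simps)
  have "DxF p q r s t 0 0 c = DxF p q r s t 0 0 0 + (1 + p\<^sup>2) * c"
    "DyF p q r s t 0 c d = DyF p q r s t 0 c 0 + (1 + p\<^sup>2) * d"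
    by (simp_all add: DxF_def DyF_def)
  then show "DxF p q r s t 0 0 c = 0" "DyF p q r s t 0 c d = 0"
    using \<open>1 + p\<^sup>2 \<noteq> 0\<close> by (simp_all add: c_def d_def)
qed

lemma contact_symmetry_quadratic_form:
  assumes "contact_symmetry g"
  shows "(1 + q\<^sup>2) * Lpq g x y u p q * r\<^sup>2 - 2 * p * q * Lpq g x y u p q * r * s
    + (1 + p\<^sup>2) * Lpq g x y u p q * s\<^sup>2 + 2 * coeff_r g x y u p q * r + 2 * coeff_s g x y u p q * s
    + (1 + p\<^sup>2) * free_term g x y u p q = 0"
proof -
  obtain t c d where F: "Fms p q r s t = 0" "DxF p q r s t 0 0 c = 0" "DyF p q r s t 0 c d = 0"
    and t: "(1 + p\<^sup>2) * t = 2 * p * q * s - (1 + q\<^sup>2) * r"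
    by (rule prolongation_point_exists)
  have "ellF g x y u p q r s t 0 0 c d = 0"
    using assms F unfolding contact_symmetry_def by blast
  then have "(s\<^sup>2 - r * t) * Lpq g x y u p q
      + 2 * (lin_r g x y u p q * r + lin_s g x y u p q * s + lin_t g x y u p q * t)
      + free_term g x y u p q = 0"
    using assms F by (simp add: ellF_expansion contact_symmetry_def)
  then have "(1 + p\<^sup>2) * ((s\<^sup>2 - r * t) * Lpq g x y u p q
      + 2 * (lin_r g x y u p q * r + lin_s g x y u p q * s + lin_t g x y u p q * t)
      + free_term g x y u p q) = 0"
    by simp
  then show ?thesis
    using t unfolding coeff_r_def coeff_s_def by simp algebra
qed

lemma contact_symmetry_imp_determining_eqs:
  assumes "contact_symmetry g"
  shows "determining_eqs g"
proof -
  have "free_term g x y u p q = 0 \<and> Lpq g x y u p q = 0 \<and> coeff_r g x y u p q = 0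
      \<and> coeff_s g x y u p q = 0" for x y u p q
  proof -
    note form = contact_symmetry_quadratic_form[OF assms, of q x y u p]
    have "0 < 1 + p\<^sup>2" "0 < 1 + q\<^sup>2"
      using zero_le_power2[of p] zero_le_power2[of q] by linarith+
    moreover have "free_term g x y u p q = 0"
      using form[of 0 0] \<open>0 < 1 + p\<^sup>2\<close> by simp
    moreover from this have "(1 + q\<^sup>2) * Lpq g x y u p q = 0" "coeff_r g x y u p q = 0"
      using form[of 1 0] form[of "-1" 0] by simp_all
    moreover from calculation have "coeff_s g x y u p q = 0"
      using form[of 0 1] by simp
    ultimately show ?thesis by simp
  qed
  then show ?thesis
    unfolding determining_eqs_def by (auto intro!: ext)
qed

lemma determining_eqs_imp_contact_symmetry:
  assumes "smooth5 g" "determining_eqs g"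
  shows "contact_symmetry g"
  unfolding contact_symmetry_def
proof (intro conjI assms(1) allI impI)
  fix x y u p q r s t a b c d
  assume F: "Fms p q r s t = 0 \<and> DxF p q r s t a b c = 0 \<and> DyF p q r s t b c d = 0"
  have eqs: "free_term g x y u p q = 0" "Lpq g x y u p q = 0" "coeff_r g x y u p q = 0"
    "coeff_s g x y u p q = 0"
    using assms(2) unfolding determining_eqs_def by simp_all
  have "0 < 1 + p\<^sup>2"
    using zero_le_power2[of p] by linarith
  have "(1 + p\<^sup>2) * (lin_r g x y u p q * r + lin_s g x y u p q * s + lin_t g x y u p q * t)
      = lin_t g x y u p q * Fms p q r s t + r * coeff_r g x y u p q + s * coeff_s g x y u p q"
    unfolding coeff_r_def coeff_s_def Fms_def by (simp add: algebra_simps power2_eq_square)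
  then have "lin_r g x y u p q * r + lin_s g x y u p q * s + lin_t g x y u p q * t = 0"
    using F eqs \<open>0 < 1 + p\<^sup>2\<close> by simp
  then show "ellF g x y u p q r s t a b c d = 0"
    using F eqs by (simp add: ellF_expansion assms(1))
qed

lemma contact_symmetry_iff_determining_eqs:
  "contact_symmetry g \<longleftrightarrow> smooth5 g \<and> determining_eqs g"
  using contact_symmetry_imp_determining_eqs determining_eqs_imp_contact_symmetry
  by (auto simp: contact_symmetry_def)

section \<open>Solving the determining equations\<close>

text \<open>nu vanishes on the three rotation sections and equals 1 + p^2 + q^2 on the scaling
  section, so it isolates the scaling component.\<close>

definition nu :: "fn5 \<Rightarrow> fn5" where "nu g = pU g - cP * pX g - cQ * pY g"

lemma smooth5_operators [simp]:
  assumes "smooth5 g"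
  shows "smooth5 (hX g)" "smooth5 (hY g)" "smooth5 (nu g)" "smooth5 (Lpq g)"
    "smooth5 (free_term g)" "smooth5 (coeff_r g)" "smooth5 (coeff_s g)"
  using assms by (simp_all add: nu_def jet_operator_defs)

text \<open>Each of the following proofs writes the quantity at hand, times a nowhere vanishing
  weight, as a combination of the determining equations and their derivatives; these are
  polynomial identities in the partial derivatives of g.\<close>

lemma hX_nu_vanishes:
  assumes g: "smooth5 g" and eqs: "determining_eqs g"
  shows "hX (nu g) = 0"
proof -
  have "2 * hX (nu g) = - hX (coeff_r g) - hY (coeff_s g) - 3 * cP * free_term g
      + cP * cQ * pQ (free_term g) + P2 * pP (free_term g)"
    unfolding nu_def jet_operator_defs using g by (intro ext) (simp add: algebra_simps)
  also have "\<dots> = 0"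
    using eqs unfolding determining_eqs_def hX_def hY_def by simp
  finally show ?thesis
    by (simp only: mult.assoc weight_mult_eq_0_iff)
qed

lemma hY_nu_vanishes:
  assumes g: "smooth5 g" and eqs: "determining_eqs g"
  shows "hY (nu g) = 0"
proof -
  have "2 * P2 * hY (nu g) = (cQ - cP * cP * cQ) * pU (coeff_r g) - 2 * cP * cQ * pX (coeff_r g)
      + P2 * pY (coeff_r g) - (cP + cP * cQ * cQ) * pU (coeff_s g) - Q2 * pX (coeff_s g)
      - 3 * cQ * P2 * free_term g + P2 * Q2 * pQ (free_term g) + P2 * cP * cQ * pP (free_term g)"
    unfolding nu_def jet_operator_defs using g by (intro ext) (simp add: algebra_simps)
  also have "\<dots> = 0"
    using eqs unfolding determining_eqs_def by simp
  finally show ?thesis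
    by (simp only: mult.assoc weight_mult_eq_0_iff)
qed

lemma hX_hX_vanishes:
  assumes g: "smooth5 g" and eqs: "determining_eqs g"
  shows "hX (hX g) = 0"
proof -
  have "2 * W * hX (hX g) = P2 * nu (coeff_r g) + cP * cQ * nu (coeff_s g) + P2 * free_term g
      + 2 * (cP + 2 * cP * cQ * cQ + cP * cP * cP) * hX (nu g) - P2 * W * pP (hX (nu g))
      - 2 * cP * cQ * W * pQ (hX (nu g)) - 2 * (cQ + cP * cP * cQ) * hY (nu g)
      + P2 * W * pQ (hY (nu g))"
    unfolding nu_def jet_operator_defs using g by (intro ext) (simp, algebra)
  also have "\<dots> = 0"
    using eqs hX_nu_vanishes[OF g eqs] hY_nu_vanishes[OF g eqs] unfolding determining_eqs_def nu_def
    by simp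
  finally show ?thesis
    by (simp only: mult.assoc weight_mult_eq_0_iff)
qed

lemma hX_hY_vanishes:
  assumes g: "smooth5 g" and eqs: "determining_eqs g"
  shows "hX (hY g) = 0"
proof -
  have "2 * W * hX (hY g) = cP * cQ * nu (coeff_r g) + Q2 * nu (coeff_s g) + cP * cQ * free_term g
      + 2 * (cQ + cQ * cQ * cQ) * hX (nu g) - Q2 * W * pQ (hX (nu g))
      + 2 * (cP + cP * cP * cP) * hY (nu g) - P2 * W * pP (hY (nu g))"
    unfolding nu_def jet_operator_defs using g by (intro ext) (simp, algebra)
  also have "\<dots> = 0"
    using eqs hX_nu_vanishes[OF g eqs] hY_nu_vanishes[OF g eqs] unfolding determining_eqs_def nu_def
    by simp
  finally show ?thesis
    by (simp only: mult.assoc weight_mult_eq_0_iff)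
qed

lemma hY_hY_vanishes:
  assumes g: "smooth5 g" and eqs: "determining_eqs g"
  shows "hY (hY g) = 0"
proof -
  have "2 * W * P2 * hY (hY g) = (- 1 - cQ * cQ - cP * cP + cP * cP * cQ * cQ) * nu (coeff_r g)
      + (cP * cQ + cP * cQ * cQ * cQ) * nu (coeff_s g) + Q2 * P2 * free_term g
      - 2 * P2 * cP * Q2 * hX (nu g) + P2 * Q2 * W * pP (hX (nu g))
      + 2 * P2 * (cQ + cQ * cQ * cQ + 2 * cP * cP * cQ) * hY (nu g)
      - 2 * cP * cQ * W * P2 * pP (hY (nu g)) - P2 * Q2 * W * pQ (hY (nu g))"
    unfolding nu_def jet_operator_defs using g by (intro ext) (simp, algebra)
  also have "\<dots> = 0"
    using eqs hX_nu_vanishes[OF g eqs] hY_nu_vanishes[OF g eqs] unfolding determining_eqs_def nu_def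
    by simp
  finally show ?thesis
    by (simp only: mult.assoc weight_mult_eq_0_iff)
qed

lemma second_partials_xyu_by_uu:
  assumes g: "smooth5 g" and eqs: "determining_eqs g"
  shows "pX (pU g) = - cP * pU (pU g)" "pY (pU g) = - cQ * pU (pU g)"
    "pX (pX g) = cP * cP * pU (pU g)" "pX (pY g) = cP * cQ * pU (pU g)"
    "pY (pY g) = cQ * cQ * pU (pU g)"
proof -
  note vanish = hX_nu_vanishes[OF g eqs] hY_nu_vanishes[OF g eqs] hX_hX_vanishes[OF g eqs]
    hX_hY_vanishes[OF g eqs] hY_hY_vanishes[OF g eqs]
  have "W * (pX (pU g) + cP * pU (pU g)) = hX (nu g) + cP * hX (hX g) + cQ * hX (hY g)"
    "W * (pY (pU g) + cQ * pU (pU g)) = hY (nu g) + cP * hX (hY g) + cQ * hY (hY g)"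
    "W * (pX (pX g) - cP * cP * pU (pU g))
       = - 2 * cP * hX (nu g) + (1 + cQ * cQ - cP * cP) * hX (hX g) - 2 * cP * cQ * hX (hY g)"
    "W * (pX (pY g) - cP * cQ * pU (pU g)) = - cQ * hX (nu g) - cP * hY (nu g)
       - cP * cQ * hX (hX g) + hX (hY g) - cP * cQ * hY (hY g)"
    "W * (pY (pY g) - cQ * cQ * pU (pU g))
       = - 2 * cQ * hY (nu g) - 2 * cP * cQ * hX (hY g) + (1 - cQ * cQ + cP * cP) * hY (hY g)"
    unfolding nu_def hX_def hY_def using g by (intro ext; simp; algebra)+
  then have "W * (pX (pU g) + cP * pU (pU g)) = 0" "W * (pY (pU g) + cQ * pU (pU g)) = 0"
    "W * (pX (pX g) - cP * cP * pU (pU g)) = 0" "W * (pX (pY g) - cP * cQ * pU (pU g)) = 0"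
    "W * (pY (pY g) - cQ * cQ * pU (pU g)) = 0"
    unfolding vanish by simp_all
  then have "pX (pU g) + cP * pU (pU g) = 0" "pY (pU g) + cQ * pU (pU g) = 0"
    "pX (pX g) - cP * cP * pU (pU g) = 0" "pX (pY g) - cP * cQ * pU (pU g) = 0"
    "pY (pY g) - cQ * cQ * pU (pU g) = 0"
    by (simp_all only: weight_mult_eq_0_iff)
  then show "pX (pU g) = - cP * pU (pU g)" "pY (pU g) = - cQ * pU (pU g)"
    "pX (pX g) = cP * cP * pU (pU g)" "pX (pY g) = cP * cQ * pU (pU g)"
    "pY (pY g) = cQ * cQ * pU (pU g)"
    by (simp_all add: eq_neg_iff_add_eq_0)
qed

lemma Lpq_commutes_xyu:
  assumes "smooth5 g"
  shows "pX (Lpq g) = Lpq (pX g)" "pY (Lpq g) = Lpq (pY g)" "pU (Lpq g) = Lpq (pU g)"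
  using assms unfolding Lpq_def by simp_all

lemma Lpq_mult_coords:
  assumes "smooth5 h"
  shows "Lpq (cP * h) = cP * Lpq h + 2 * (P2 * pP h + cP * cQ * pQ h)"
    "Lpq (cQ * h) = cQ * Lpq h + 2 * (cP * cQ * pP h + Q2 * pQ h)"
  using assms unfolding Lpq_def by (intro ext; simp; algebra)+

lemma Lpq_uminus: "smooth5 h \<Longrightarrow> Lpq (- h) = - Lpq h"
  unfolding Lpq_def by (simp add: algebra_simps)

text \<open>Lpq commutes with the x, y, u derivatives, so by second_partials_xyu_by_uu it annihilates
  h = g_uu, p h, q h and p^2 h. The middle two give a nonsingular linear system for h_p and h_q,
  and then the last one reduces to 2 (1 + p^2) h = 0.\<close>

lemma pU_pU_vanishes:
  assumes g: "smooth5 g" and eqs: "determining_eqs g"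
  shows "pU (pU g) = 0"
proof -
  define h where "h = pU (pU g)"
  have h: "smooth5 h"
    using g by (simp add: h_def)
  have "Lpq (pU (pU g)) = 0" "Lpq (pX (pU g)) = 0" "Lpq (pY (pU g)) = 0" "Lpq (pX (pX g)) = 0"
    using eqs g unfolding determining_eqs_def by (simp_all flip: Lpq_commutes_xyu)
  then have "Lpq h = 0" "Lpq (cP * h) = 0" "Lpq (cQ * h) = 0" "Lpq (cP * (cP * h)) = 0"
    unfolding second_partials_xyu_by_uu[OF g eqs] h_def[symmetric]
    using h by (simp_all add: Lpq_uminus mult.assoc)
  then have "2 * (P2 * pP h + cP * cQ * pQ h) = 0" "2 * (cP * cQ * pP h + Q2 * pQ h) = 0"
    using h by (simp_all add: Lpq_mult_coords)
  then have hp: "P2 * pP h + cP * cQ * pQ h = 0" and hq: "cP * cQ * pP h + Q2 * pQ h = 0"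
    by (simp_all only: weight_mult_eq_0_iff)
  have "W * pP h = Q2 * (P2 * pP h + cP * cQ * pQ h) - cP * cQ * (cP * cQ * pP h + Q2 * pQ h)"
    "W * pQ h = P2 * (cP * cQ * pP h + Q2 * pQ h) - cP * cQ * (P2 * pP h + cP * cQ * pQ h)"
    by (intro ext; simp; algebra)+
  then have "pP h = 0" "pQ h = 0"
    unfolding hp hq by (simp_all add: weight_mult_eq_0_iff)
  then have "2 * P2 * h = 0"
    using \<open>Lpq (cP * (cP * h)) = 0\<close> \<open>Lpq (cP * h) = 0\<close> h
    by (simp add: Lpq_mult_coords algebra_simps)
  then show ?thesis
    unfolding h_def by (simp only: mult.assoc weight_mult_eq_0_iff)
qed

lemma second_partials_xyu_vanish:
  assumes g: "smooth5 g" and eqs: "determining_eqs g"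
  shows "pX (pX g) = 0" "pX (pY g) = 0" "pX (pU g) = 0" "pY (pY g) = 0" "pY (pU g) = 0"
    "pU (pU g) = 0"
  using second_partials_xyu_by_uu[OF g eqs] pU_pU_vanishes[OF g eqs] by simp_all

lemma proportional_to_W:
  assumes f: "smooth5 f" and xyu: "pX f = 0" "pY f = 0" "pU f = 0"
    and pq: "W * pP f = 2 * cP * f" "W * pQ f = 2 * cQ * f"
  obtains k where "f = cst k * W"
proof -
  define w where "w = (\<lambda>x y u p q. f x y u p q / (1 + p * p + q * q))"
  have w_const: "w x y u p q = w 0 0 0 0 0" for x y u p q
  proof (rule constant_if_zero_derivatives)
    fix x y u p q :: real
    have W_ne: "1 + p * p + q * q \<noteq> 0"
      by (rule weights_nonzero)
    show "((\<lambda>v. w v y u p q) has_real_derivative 0) (at x)"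
      "((\<lambda>v. w x v u p q) has_real_derivative 0) (at y)"
      "((\<lambda>v. w x y v p q) has_real_derivative 0) (at u)"
      unfolding w_def using smooth5_has_partials(1-3)[OF f, THEN DERIV_cdivide] xyu by simp_all
    have "((\<lambda>v. w x y u v q) has_real_derivative
        (pP f x y u p q * (1 + p * p + q * q) - f x y u p q * (2 * p))
          / ((1 + p * p + q * q) * (1 + p * p + q * q))) (at p)"
      unfolding w_def using smooth5_has_partials(4)[OF f] W_ne
      by (auto intro!: derivative_eq_intros)
    moreover have "pP f x y u p q * (1 + p * p + q * q) - f x y u p q * (2 * p) = 0"
      using arg_cong[OF pq(1), of "\<lambda>h. h x y u p q"] by (simp add: algebra_simps)
    ultimately show "((\<lambda>v. w x y u v q) has_real_derivative 0) (at p)"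
      by simp
    have "((\<lambda>v. w x y u p v) has_real_derivative
        (pQ f x y u p q * (1 + p * p + q * q) - f x y u p q * (2 * q))
          / ((1 + p * p + q * q) * (1 + p * p + q * q))) (at q)"
      unfolding w_def using smooth5_has_partials(5)[OF f] W_ne
      by (auto intro!: derivative_eq_intros)
    moreover have "pQ f x y u p q * (1 + p * p + q * q) - f x y u p q * (2 * q) = 0"
      using arg_cong[OF pq(2), of "\<lambda>h. h x y u p q"] by (simp add: algebra_simps)
    ultimately show "((\<lambda>v. w x y u p v) has_real_derivative 0) (at q)"
      by simp
  qed
  show thesis
  proof
    show "f = cst (w 0 0 0 0 0) * W"
    proof (intro ext)
      fix x y u p q
      show "f x y u p q = (cst (w 0 0 0 0 0) * W) x y u p q"
        using w_const[of x y u p q] weights_nonzero(3)[of p q] by (simp add: w_def field_simps)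
    qed
  qed
qed

lemma nu_eq_const_mult_W:
  assumes g: "smooth5 g" and eqs: "determining_eqs g"
  obtains k where "nu g = cst k * W"
proof (rule proportional_to_W)
  note eqs' = eqs[unfolded determining_eqs_def]
  show "smooth5 (nu g)"
    using g by simp
  show "pX (nu g) = 0" "pY (nu g) = 0" "pU (nu g) = 0"
    using g second_partials_xyu_vanish[OF g eqs] by (simp_all add: nu_def)
  show "W * pP (nu g) = 2 * cP * nu g"
  proof -
    have "2 * P2 * (W * pP (nu g) - 2 * cP * nu g)
        = 2 * (- cP - 3 * cP * cQ * cQ - cP * cP * cP) * coeff_r g
        + P2 * W * pP (coeff_r g) + 2 * cP * cQ * W * pQ (coeff_r g)
        + 2 * (- cQ - cQ * cQ * cQ + cP * cP * cQ) * coeff_s g + Q2 * W * pQ (coeff_s g)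
        - P2 * Q2 * W * pX (Lpq g) + P2 * cP * cQ * W * pY (Lpq g) - P2 * cP * W * pU (Lpq g)"
      unfolding nu_def jet_operator_defs using g by (intro ext) (simp, algebra)
    also have "\<dots> = 0"
      using eqs' by simp
    finally show ?thesis
      by (simp only: mult.assoc weight_mult_eq_0_iff right_minus_eq)
  qed
  show "W * pQ (nu g) = 2 * cQ * nu g"
  proof -
    have "2 * (W * pQ (nu g) - 2 * cQ * nu g) = 4 * cQ * coeff_r g - W * pQ (coeff_r g)
        - 4 * cP * coeff_s g + W * pP (coeff_s g) + cP * cQ * W * pX (Lpq g)
        - (1 + cQ * cQ + 2 * cP * cP + cP * cP * cQ * cQ + cP * cP * cP * cP) * pY (Lpq g)
        - cQ * W * pU (Lpq g)"
      unfolding nu_def jet_operator_defs using g by (intro ext) (simp, algebra)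
    also have "\<dots> = 0"
      using eqs' by simp
    finally show ?thesis
      by (simp only: mult.assoc weight_mult_eq_0_iff right_minus_eq)
  qed
qed

lemma mixed_xy_pq_partials:
  assumes g: "smooth5 g" and eqs: "determining_eqs g"
    and G: "pU g = cP * pX g + cQ * pY g + cst k * W"
  shows "pX (pP g) = - cst k" "pY (pQ g) = - cst k" "pY (pP g) = - pX (pQ g)"
proof -
  note eqs' = eqs[unfolded determining_eqs_def]
  let ?G = "cP * pX g + cQ * pY g + cst k * W"
  have "pU (pP g) = pP ?G" "pU (pQ g) = pQ ?G" "pU (pP (pP g)) = pP (pP ?G)"
    "pU (pP (pQ g)) = pP (pQ ?G)" "pU (pQ (pQ g)) = pQ (pQ ?G)"
    using g by (simp_all flip: G del: partial_rules)
  note Gs = G this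
  have "4 * W * W * P2 * (pX (pP g) + cst k)
      = 2 * (1 + cQ * cQ + cP * cP - cP * cP * cQ * cQ) * coeff_r g
      - 2 * cP * cQ * Q2 * coeff_s g - cP * Q2 * W * P2 * pX (Lpq g) - cQ * Q2 * W * P2 * pY (Lpq g)
      + Q2 * W * P2 * pU (Lpq g)"
    unfolding jet_operator_defs using g by (intro ext) (simp add: Gs, algebra)
  also have "\<dots> = 0"
    using eqs' by simp
  finally have "pX (pP g) + cst k = 0"
    by (simp only: mult.assoc weight_mult_eq_0_iff)
  then show "pX (pP g) = - cst k"
    by (simp add: eq_neg_iff_add_eq_0)
  have "4 * W * W * (pY (pQ g) + cst k) = - 2 * P2 * coeff_r g - 2 * cP * cQ * coeff_s g
      - cP * P2 * W * pX (Lpq g) - cQ * P2 * W * pY (Lpq g) + P2 * W * pU (Lpq g)"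
    unfolding jet_operator_defs using g by (intro ext) (simp add: Gs, algebra)
  also have "\<dots> = 0"
    using eqs' by simp
  finally have "pY (pQ g) + cst k = 0"
    by (simp only: mult.assoc weight_mult_eq_0_iff)
  then show "pY (pQ g) = - cst k"
    by (simp add: eq_neg_iff_add_eq_0)
  have "2 * W * W * (pX (pQ g) + pY (pP g)) = 2 * cP * cQ * coeff_r g + 2 * Q2 * coeff_s g
      + cP * cP * cQ * W * pX (Lpq g) + cP * cQ * cQ * W * pY (Lpq g) - cP * cQ * W * pU (Lpq g)"
    unfolding jet_operator_defs using g by (intro ext) (simp add: Gs, algebra)
  also have "\<dots> = 0"
    using eqs' by simp
  finally have "pX (pQ g) + pY (pP g) = 0"
    by (simp only: mult.assoc weight_mult_eq_0_iff)
  then show "pY (pP g) = - pX (pQ g)"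
    by (simp add: eq_neg_iff_add_eq_0 add.commute)
qed

lemma xy_partials_affine:
  assumes g: "smooth5 g" and eqs: "determining_eqs g"
    and au: "pU g = cP * pX g + cQ * pY g + cst k * W"
  obtains c1 c2 c3 where "pX g = cst c2 - cst k * cP - cst c1 * cQ"
    "pY g = cst c3 + cst c1 * cP - cst k * cQ"
proof -
  note xyu = second_partials_xyu_vanish[OF g eqs]
  note pq = mixed_xy_pq_partials[OF g eqs au]
  define c1 where "c1 = - pX (pQ g) 0 0 0 0 0"
  have "pX (pQ g) = cst (pX (pQ g) 0 0 0 0 0)"
  proof (rule smooth5_constant)
    show "smooth5 (pX (pQ g))"
      using g by simp
    have "pQ (pX (pX g)) = 0" "pQ (pX (pY g)) = 0" "pQ (pX (pU g)) = 0" "pQ (pX (pP g)) = 0"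
      using xyu pq(1) by simp_all
    then show "pX (pX (pQ g)) = 0" "pY (pX (pQ g)) = 0" "pU (pX (pQ g)) = 0" "pP (pX (pQ g)) = 0"
      using g by simp_all
    have "pQ (pY (pP g)) = - pQ (pX (pQ g))"
      using g pq(3) by simp
    moreover have "pP (pY (pQ g)) = 0"
      using pq(2) by simp
    ultimately show "pQ (pX (pQ g)) = 0"
      using g by simp
  qed
  then have aq: "pX (pQ g) = - cst c1"
    by (simp add: c1_def cst_def fun_eq_iff)
  show thesis
  proof
    show "pX g = cst (pX g 0 0 0 0 0) - cst k * cP - cst c1 * cQ"
      by (rule smooth5_eqI_partials) (use g xyu pq aq in simp_all)
    show "pY g = cst (pY g 0 0 0 0 0) + cst c1 * cP - cst k * cQ"
      by (rule smooth5_eqI_partials) (use g xyu pq aq in simp_all)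
  qed
qed

definition phi_rot_xy :: fn5 where "phi_rot_xy = cY * cP - cX * cQ"
definition phi_rot_xu :: fn5 where "phi_rot_xu = cX + cU * cP"
definition phi_rot_yu :: fn5 where "phi_rot_yu = cY + cU * cQ"
definition phi_scaling :: fn5 where "phi_scaling = cU - cX * cP - cY * cQ"

lemmas phi_defs = phi_rot_xy_def phi_rot_xu_def phi_rot_yu_def phi_scaling_def

lemma smooth5_phis [simp]:
  "smooth5 phi_rot_xy" "smooth5 phi_rot_xu" "smooth5 phi_rot_yu" "smooth5 phi_scaling"
  by (simp_all add: phi_defs)

lemma pq_solution_iff:
  "pq_solution h \<longleftrightarrow> smooth5 h \<and> pX h = 0 \<and> pY h = 0 \<and> pU h = 0 \<and> Lpq h = 0"
proof
  assume h: "pq_solution h"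
  then have "smooth5 h"
    by (simp add: pq_solution_def)
  moreover have "Lpq h = 0"
  proof (intro ext)
    fix x y u p q
    show "Lpq h x y u p q = 0 x y u p q"
      using h \<open>smooth5 h\<close> unfolding pq_solution_def Lpq_def by (simp add: power2_eq_square)
  qed
  moreover obtain H where "h = (\<lambda>x y u p q. H p q)"
    using h by (auto simp: pq_solution_def)
  ultimately show "smooth5 h \<and> pX h = 0 \<and> pY h = 0 \<and> pU h = 0 \<and> Lpq h = 0"
    unfolding pX_def pY_def pU_def by (auto intro!: ext)
next
  assume h: "smooth5 h \<and> pX h = 0 \<and> pY h = 0 \<and> pU h = 0 \<and> Lpq h = 0"
  then have "h x y u p q = h 0 0 0 p q" for x y u p q
    using smooth5_has_partials[of h] by (intro constant_in_xyu) auto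
  then have "h = (\<lambda>x y u p q. h 0 0 0 p q)"
    by (intro ext)
  moreover have "(1 + p\<^sup>2) * pP (pP h) x y u p q + 2 * p * q * pQ (pP h) x y u p q
      + (1 + q\<^sup>2) * pQ (pQ h) x y u p q = 0" for x y u p q
  proof -
    have "Lpq h x y u p q = 0"
      using h by simp
    then show ?thesis
      using h[THEN conjunct1] unfolding Lpq_def by (simp add: power2_eq_square)
  qed
  ultimately show "pq_solution h"
    unfolding pq_solution_def using h by blast
qed

lemma determining_eqs_solution:
  assumes g: "smooth5 g" and eqs: "determining_eqs g"
  obtains h c1 c2 c3 c4 where "pq_solution h"
    "g = h + cst c1 * phi_rot_xy + cst c2 * phi_rot_xu + cst c3 * phi_rot_yu + cst c4 * phi_scaling"
proof -
  obtain k where "nu g = cst k * W"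
    using nu_eq_const_mult_W[OF g eqs] .
  then have au: "pU g = cP * pX g + cQ * pY g + cst k * W"
    unfolding nu_def by (simp add: algebra_simps)
  obtain c1 c2 c3 where ax: "pX g = cst c2 - cst k * cP - cst c1 * cQ"
    and ay: "pY g = cst c3 + cst c1 * cP - cst k * cQ"
    using xy_partials_affine[OF g eqs au] .
  define h where "h = g - (cst c1 * phi_rot_xy + cst c2 * phi_rot_xu + cst c3 * phi_rot_yu
    + cst k * phi_scaling)"
  have "pq_solution h"
    unfolding pq_solution_iff
  proof (intro conjI)
    show "smooth5 h" "pX h = 0" "pY h = 0"
      unfolding h_def phi_defs using g ax ay by (simp_all add: algebra_simps)
    show "pU h = 0"
      unfolding h_def phi_defs using g by (simp add: au ax ay algebra_simps)
    show "Lpq h = 0"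
      using g eqs unfolding h_def Lpq_def phi_defs determining_eqs_def by (simp add: algebra_simps)
  qed
  moreover have "g = h + cst c1 * phi_rot_xy + cst c2 * phi_rot_xu + cst c3 * phi_rot_yu
      + cst k * phi_scaling"
    by (simp add: h_def)
  ultimately show thesis
    by (rule that)
qed

lemma phi_combination_is_contact_symmetry:
  assumes "pq_solution h"
  shows "contact_symmetry (h + cst c1 * phi_rot_xy + cst c2 * phi_rot_xu + cst c3 * phi_rot_yu
    + cst c4 * phi_scaling)" (is "contact_symmetry ?g")
proof -
  have h: "smooth5 h" "pX h = 0" "pY h = 0" "pU h = 0" "Lpq h = 0"
    using assms unfolding pq_solution_iff by simp_all
  then have "pP (pX h) = 0" "pQ (pX h) = 0" "pP (pY h) = 0" "pQ (pY h) = 0" "pP (pU h) = 0"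
    "pQ (pU h) = 0"
    by simp_all
  then have mixed: "pX (pP h) = 0" "pX (pQ h) = 0" "pY (pP h) = 0" "pY (pQ h) = 0" "pU (pP h) = 0"
    "pU (pQ h) = 0"
    using h(1) by simp_all
  have "free_term ?g = 0"
    unfolding jet_operator_defs phi_defs using h mixed by (intro ext) (simp add: algebra_simps)
  moreover have "Lpq ?g = Lpq h"
    unfolding Lpq_def phi_defs using h(1) by (simp add: algebra_simps)
  moreover have "coeff_r ?g = 0"
    unfolding jet_operator_defs phi_defs using h mixed by (intro ext) (simp add: algebra_simps)
  moreover have "coeff_s ?g = 0"
    unfolding jet_operator_defs phi_defs using h mixed by (intro ext) (simp add: algebra_simps)
  ultimately show ?thesis
    unfolding contact_symmetry_iff_determining_eqs determining_eqs_def using h by simp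
qed

lemma contact_symmetry_iff_phi_combination:
  "contact_symmetry g \<longleftrightarrow> (\<exists>h c1 c2 c3 c4.
     g = h + cst c1 * phi_rot_xy + cst c2 * phi_rot_xu + cst c3 * phi_rot_yu + cst c4 * phi_scaling
     \<and> pq_solution h)"
  using determining_eqs_solution phi_combination_is_contact_symmetry
  unfolding contact_symmetry_iff_determining_eqs by metis

theorem proposition5:
  shows "{g. contact_symmetry g} =
    {(\<lambda>x y u p q. h x y u p q + c1 * (y * p - x * q) + c2 * (x + u * p)
                 + c3 * (y + u * q) + c4 * (u - x * p - y * q))
     | h c1 c2 c3 c4. pq_solution h}"
proof -
  have "h + cst c1 * phi_rot_xy + cst c2 * phi_rot_xu + cst c3 * phi_rot_yu + cst c4 * phi_scaling
      = (\<lambda>x y u p q. h x y u p q + c1 * (y * p - x * q) + c2 * (x + u * p)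
                 + c3 * (y + u * q) + c4 * (u - x * p - y * q))" for h c1 c2 c3 c4
    by (simp add: phi_defs fun_eq_iff)
  then show ?thesis
    unfolding contact_symmetry_iff_phi_combination by simp
qed

end
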